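(* Let $c=56^2$ and $c'=27$. Let $0<\epsilon\le\Delta\le1$, let $n\ge2$, and let $\tilde p$ be a probability distribution on $\{1,\dots,n\}$. Let $S=c(\Delta/\epsilon)^2\log n$ and let $\beta\le1$ satisfy $1-\beta\ge8\Delta$. Assume $\{1,\dots,n\}$ is partitioned into sets $H$ and $L$ with $\sum_{i\in L}\tilde p_i=1-\beta$, $\sum_{i\in H}\tilde p_i=\beta$, and $\sum_{i\in L}\tilde p_i^2\le (1-\beta)^2/S$. Let $v_1,\dots,v_{k_1}\in[-1,1]^n$ with $k_1=n^2$, and let $p_1,\dots,p_{k_2}$ be probability distributions on $\{1,\dots,n\}$ with $k_2\le n^{c'(\Delta/\epsilon)^2}$. Then there exists a probability distribution $\tilde p'$ on $\{1,\dots,n\}$ with $\mathrm{supp}(\tilde p')\subseteq\mathrm{supp}(\tilde p)$ such that: (1) $d(\tilde p,\tilde p')=3\Delta$; (2) $\tilde p'\cdot v_i\le\tilde p\cdot v_i+\epsilon$ for all $i\in\{1,\dots,k_1\}$; (3) $d(\tilde p',p_i)>d(\tilde p,p_i)-\Delta$ for all $i\in\{1,\dots,k_2\}$.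
   Context: $\mathrm{supp}(p)=\{i:p_i>0\}$. For distributions $p,p'$, $d(p,p')=\frac12\sum_i|p_i-p'_i|$ (variation distance). $\log$ is the natural logarithm. *)

theory Defs
  imports Complex_Main
begin

text \<open>Probability distributions on {1..n}, represented as functions nat => real
  (values outside {1..n} are irrelevant).\<close>
definition prob_dist :: "nat \<Rightarrow> (nat \<Rightarrow> real) \<Rightarrow> bool" where
  "prob_dist n p \<longleftrightarrow> (\<forall>i\<in>{1..n}. p i \<ge> 0) \<and> (\<Sum>i=1..n. p i) = 1"

definition supp :: "nat \<Rightarrow> (nat \<Rightarrow> real) \<Rightarrow> nat set" where
  "supp n p = {i\<in>{1..n}. p i > 0}"

definition var_dist :: "nat \<Rightarrow> (nat \<Rightarrow> real) \<Rightarrow> (nat \<Rightarrow> real) \<Rightarrow> real" where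
  "var_dist n p q = (1/2) * (\<Sum>i=1..n. \<bar>p i - q i\<bar>)"

definition dotp :: "nat \<Rightarrow> (nat \<Rightarrow> real) \<Rightarrow> (nat \<Rightarrow> real) \<Rightarrow> real" where
  "dotp n p v = (\<Sum>i=1..n. p i * v i)"

end

theory Submission
  imports Defs "HOL-Probability.Hoeffding"
begin

text \<open>
  Let \<open>q\<close> be \<open>p\<close> conditioned on \<open>L\<close> and draw \<open>m \<approx> S/4\<close> independent samples from \<open>q\<close>.
  With positive probability the empirical distribution \<open>e\<close> of the sample has three properties
  at once. Its variation distance from \<open>q\<close> exceeds \<open>1/2\<close>: this distance is at least
  \<open>1 - \<Sum>\<^sub>k q(\<omega>\<^sub>k)\<close>, and by Markov's inequality the sum is below \<open>1/2\<close>, its mean being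
  \<open>m \<Sum> q\<^sup>2 \<le> m/S \<le> 1/4\<close>. And, by Hoeffding's inequality and a union bound over the
  \<open>k\<^sub>1 + k\<^sub>2\<close> tests, every \<open>v\<^sub>i\<close> has \<open>e\<close>-average less than its \<open>q\<close>-average plus
  \<open>\<epsilon>/(6\<Delta>)\<close>, and every sign vector \<open>sgn(p - p\<^sub>i)\<close> has \<open>e\<close>-average more than its
  \<open>q\<close>-average minus \<open>1/3\<close>.
  Then \<open>p' = p + \<alpha>(e - q)\<close> with \<open>\<alpha> = 3\<Delta>/d(e,q) < 6\<Delta>\<close> works: it is nonnegative since
  \<open>6\<Delta> q \<le> p\<close> (as \<open>1 - \<beta> \<ge> 8\<Delta>\<close>), it is at distance exactly \<open>3\<Delta>\<close> from \<open>p\<close>, it changes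
  each \<open>p\<cdot>v\<^sub>i\<close> by less than \<open>\<epsilon>\<close>, and since \<open>2 d(p', p\<^sub>i) \<ge> \<Sum> sgn(p - p\<^sub>i)(p' - p\<^sub>i)\<close>
  it lowers each \<open>d(\<cdot>, p\<^sub>i)\<close> by less than \<open>\<Delta>\<close>.
\<close>

section \<open>Variation distance and empirical distributions\<close>

lemma var_dist_eq_one_minus_sum_min:
  assumes "prob_dist n p" "prob_dist n q"
  shows "var_dist n p q = 1 - (\<Sum>j=1..n. min (p j) (q j))"
proof -
  have "(\<Sum>j=1..n. \<bar>p j - q j\<bar>) = (\<Sum>j=1..n. p j + q j - 2 * min (p j) (q j))"
    by (intro sum.cong) (auto simp: min_def)
  also have "\<dots> = 2 - 2 * (\<Sum>j=1..n. min (p j) (q j))"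
    using assms by (simp add: prob_dist_def sum.distrib sum_subtractf sum_distrib_left)
  finally show ?thesis by (simp add: var_dist_def)
qed

lemma prob_dist_le_1:
  assumes "prob_dist n q" "j \<in> {1..n}"
  shows "q j \<le> 1"
  using assms member_le_sum[of j "{1..n}" q] by (simp add: prob_dist_def)

definition empirical :: "nat \<Rightarrow> (nat \<Rightarrow> nat) \<Rightarrow> nat \<Rightarrow> real" where
  "empirical m \<omega> j = card {k\<in>{..<m}. \<omega> k = j} / m"

lemma empirical_nonneg: "empirical m \<omega> j \<ge> 0"
  by (simp add: empirical_def)

lemma dotp_empirical:
  assumes "\<forall>k<m. \<omega> k \<in> {1..n}"
  shows "dotp n (empirical m \<omega>) f = (\<Sum>k<m. f (\<omega> k)) / m"
proof -
  have "(\<Sum>j=1..n. card {k\<in>{..<m}. \<omega> k = j} * f j) = (\<Sum>j=1..n. \<Sum>k\<in>{k\<in>{..<m}. \<omega> k = j}. f (\<omega> k))"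
    by simp
  also have "\<dots> = (\<Sum>k<m. f (\<omega> k))"
    using assms by (intro sum.group) auto
  finally show ?thesis
    by (simp add: dotp_def empirical_def flip: sum_divide_distrib)
qed

lemma prob_dist_empirical:
  assumes "m > 0" "\<forall>k<m. \<omega> k \<in> {1..n}"
  shows "prob_dist n (empirical m \<omega>)"
  using dotp_empirical[OF assms(2), of "\<lambda>_. 1"] assms(1)
  by (simp add: prob_dist_def dotp_def empirical_nonneg)

lemma supp_empirical: "supp n (empirical m \<omega>) \<subseteq> \<omega> ` {..<m}"
proof
  fix j assume "j \<in> supp n (empirical m \<omega>)"
  then have "0 < real (card {k\<in>{..<m}. \<omega> k = j}) / m"
    unfolding supp_def empirical_def by blast
  then have "{k\<in>{..<m}. \<omega> k = j} \<noteq> {}"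
    by (auto simp: zero_less_divide_iff card_gt_0_iff)
  then show "j \<in> \<omega> ` {..<m}" by blast
qed

lemma var_dist_empirical_ge:
  assumes "m > 0" "\<forall>k<m. \<omega> k \<in> {1..n}" and q: "prob_dist n q"
  shows "var_dist n (empirical m \<omega>) q \<ge> 1 - (\<Sum>k<m. q (\<omega> k))"
proof -
  \<comment> \<open>\<open>m * empirical m \<omega> j\<close> is a count, hence either \<open>0\<close> or at least \<open>1\<close>.\<close>
  have "min (empirical m \<omega> j) (q j) \<le> m * empirical m \<omega> j * q j" if "j \<in> {1..n}" for j
  proof (cases "card {k\<in>{..<m}. \<omega> k = j} = 0")
    case True
    then show ?thesis unfolding empirical_def True by simp
  next
    case False
    then have "1 \<le> real (card {k\<in>{..<m}. \<omega> k = j})"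
      by (metis less_one not_le of_nat_1 of_nat_le_iff)
    then have "1 \<le> m * empirical m \<omega> j"
      using \<open>m > 0\<close> by (simp add: empirical_def)
    moreover have "q j \<ge> 0" using q that by (simp add: prob_dist_def)
    ultimately have "q j \<le> m * empirical m \<omega> j * q j"
      using mult_right_mono[of 1 "m * empirical m \<omega> j" "q j"] by simp
    then show ?thesis by linarith
  qed
  then have "(\<Sum>j=1..n. min (empirical m \<omega> j) (q j)) \<le> m * dotp n (empirical m \<omega>) q"
    unfolding dotp_def sum_distrib_left by (intro sum_mono) (simp add: mult.assoc)
  also have "\<dots> = (\<Sum>k<m. q (\<omega> k))"
    using \<open>m > 0\<close> by (simp add: dotp_empirical[OF assms(2)])
  finally show ?thesis
    using var_dist_eq_one_minus_sum_min[OF prob_dist_empirical[OF assms(1,2)] q] by simp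
qed

section \<open>Shifting a distribution\<close>

lemma dotp_shift:
  "dotp n (\<lambda>j. p j + \<alpha> * (e j - q j)) v = dotp n p v + \<alpha> * (dotp n e v - dotp n q v)"
  by (simp add: dotp_def algebra_simps sum.distrib sum_subtractf sum_distrib_left)

lemma var_dist_shift:
  "var_dist n p (\<lambda>j. p j + \<alpha> * (e j - q j)) = \<bar>\<alpha>\<bar> * var_dist n e q"
  by (simp add: var_dist_def abs_mult sum_distrib_left)

lemma var_dist_shift_ge:
  fixes p e q r :: "nat \<Rightarrow> real" and \<alpha> :: real
  defines "s \<equiv> \<lambda>j. sgn (p j - r j)"
  shows "var_dist n (\<lambda>j. p j + \<alpha> * (e j - q j)) r \<ge> var_dist n p r + \<alpha> / 2 * (dotp n e s - dotp n q s)"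
proof -
  have "dotp n (\<lambda>j. p j + \<alpha> * (e j - q j) - r j) s \<le> (\<Sum>j=1..n. \<bar>p j + \<alpha> * (e j - q j) - r j\<bar>)"
    unfolding dotp_def s_def by (intro sum_mono) (auto simp: sgn_if)
  moreover have "(\<Sum>j=1..n. \<bar>p j - r j\<bar>) = dotp n (\<lambda>j. p j - r j) s"
    unfolding dotp_def s_def by (intro sum.cong) (auto simp: sgn_if)
  then have "dotp n (\<lambda>j. p j + \<alpha> * (e j - q j) - r j) s
      = (\<Sum>j=1..n. \<bar>p j - r j\<bar>) + \<alpha> * (dotp n e s - dotp n q s)"
    unfolding dotp_def by (simp add: algebra_simps sum.distrib sum_subtractf sum_distrib_left)
  ultimately show ?thesis by (simp add: var_dist_def)
qed

context
  fixes n :: nat and p e q :: "nat \<Rightarrow> real" and \<alpha> :: real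
  assumes p: "prob_dist n p" and e: "prob_dist n e" and q: "prob_dist n q"
    and "\<alpha> > 0" and room: "\<forall>j\<in>{1..n}. \<alpha> * q j \<le> p j"
begin

lemma prob_dist_shift: "prob_dist n (\<lambda>j. p j + \<alpha> * (e j - q j))"
proof -
  have "0 \<le> p j + \<alpha> * (e j - q j)" if "j \<in> {1..n}" for j
  proof -
    have "\<alpha> * q j \<le> p j" "0 \<le> \<alpha> * e j"
      using room that e \<open>\<alpha> > 0\<close> by (auto simp: prob_dist_def)
    then show ?thesis by (simp add: algebra_simps)
  qed
  moreover have "(\<Sum>j=1..n. p j + \<alpha> * (e j - q j)) = 1"
    using dotp_shift[of n p \<alpha> e q "\<lambda>_. 1"] p e q by (simp add: dotp_def prob_dist_def)
  ultimately show ?thesis by (simp add: prob_dist_def)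
qed

lemma supp_shift_subset:
  assumes "supp n e \<subseteq> supp n p"
  shows "supp n (\<lambda>j. p j + \<alpha> * (e j - q j)) \<subseteq> supp n p"
proof
  fix j assume "j \<in> supp n (\<lambda>j. p j + \<alpha> * (e j - q j))"
  then have j: "j \<in> {1..n}" "p j + \<alpha> * (e j - q j) > 0" by (auto simp: supp_def)
  show "j \<in> supp n p"
  proof (rule ccontr)
    assume "j \<notin> supp n p"
    then have "p j = 0" using p j(1) by (force simp: supp_def prob_dist_def)
    then have "q j = 0"
      using room j(1) q \<open>\<alpha> > 0\<close> by (force simp: prob_dist_def mult_le_0_iff)
    then have "e j > 0" using j(2) \<open>p j = 0\<close> \<open>\<alpha> > 0\<close> by (simp add: zero_less_mult_iff)
    then show False using assms j(1) \<open>j \<notin> supp n p\<close> by (auto simp: supp_def)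
  qed
qed

end

lemma ex_shifted_dist:
  fixes p e q :: "nat \<Rightarrow> real" and v P :: "nat \<Rightarrow> nat \<Rightarrow> real"
  assumes p: "prob_dist n p" and e: "prob_dist n e" and q: "prob_dist n q"
    and far: "var_dist n e q > 1/2" and "\<Delta> > 0" "\<epsilon> \<ge> 0"
    and q_le: "\<forall>j\<in>{1..n}. 6 * \<Delta> * q j \<le> p j" and supp_e: "supp n e \<subseteq> supp n p"
    and tests: "\<forall>i\<in>I. dotp n e (v i) < dotp n q (v i) + \<epsilon> / (6 * \<Delta>)"
    and signs: "\<forall>i\<in>J. dotp n e (\<lambda>j. sgn (p j - P i j)) > dotp n q (\<lambda>j. sgn (p j - P i j)) - 1/3"
  shows "\<exists>p'. prob_dist n p' \<and> supp n p' \<subseteq> supp n p \<and> var_dist n p p' = 3 * \<Delta>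
           \<and> (\<forall>i\<in>I. dotp n p' (v i) \<le> dotp n p (v i) + \<epsilon>)
           \<and> (\<forall>i\<in>J. var_dist n p' (P i) > var_dist n p (P i) - \<Delta>)"
proof -
  define \<alpha> where "\<alpha> = 3 * \<Delta> / var_dist n e q"
  define p' where "p' = (\<lambda>j. p j + \<alpha> * (e j - q j))"
  have "\<alpha> > 0" "\<alpha> < 6 * \<Delta>"
    using far \<open>\<Delta> > 0\<close> by (auto simp: \<alpha>_def field_simps)
  have "\<forall>j\<in>{1..n}. \<alpha> * q j \<le> p j"
  proof
    fix j assume j: "j \<in> {1..n}"
    have "\<alpha> * q j \<le> 6 * \<Delta> * q j"
      using \<open>\<alpha> < 6 * \<Delta>\<close> q j by (intro mult_right_mono) (auto simp: prob_dist_def)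
    then show "\<alpha> * q j \<le> p j" using q_le j by fastforce
  qed
  then have "prob_dist n p'" "supp n p' \<subseteq> supp n p"
    using prob_dist_shift supp_shift_subset p e q \<open>\<alpha> > 0\<close> supp_e by (simp_all add: p'_def)
  moreover have "var_dist n p p' = 3 * \<Delta>"
    using var_dist_shift[of n p \<alpha> e q] far \<open>\<alpha> > 0\<close> \<open>\<Delta> > 0\<close> by (simp add: p'_def \<alpha>_def)
  moreover have "dotp n p' (v i) \<le> dotp n p (v i) + \<epsilon>" if "i \<in> I" for i
  proof -
    have "\<alpha> * (dotp n e (v i) - dotp n q (v i)) \<le> \<alpha> * (\<epsilon> / (6 * \<Delta>))"
      using tests that \<open>\<alpha> > 0\<close> by (intro mult_left_mono) auto
    also have "\<dots> \<le> 6 * \<Delta> * (\<epsilon> / (6 * \<Delta>))"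
      using \<open>\<alpha> < 6 * \<Delta>\<close> \<open>\<Delta> > 0\<close> \<open>\<epsilon> \<ge> 0\<close> by (intro mult_right_mono) auto
    finally show ?thesis
      using \<open>\<Delta> > 0\<close> by (simp add: p'_def dotp_shift)
  qed
  moreover have "var_dist n p' (P i) > var_dist n p (P i) - \<Delta>" if "i \<in> J" for i
  proof -
    have "\<alpha> / 2 * (dotp n e (\<lambda>j. sgn (p j - P i j)) - dotp n q (\<lambda>j. sgn (p j - P i j))) > \<alpha> / 2 * (- 1/3)"
      using signs that \<open>\<alpha> > 0\<close> by (intro mult_strict_left_mono) auto
    then show ?thesis
      using var_dist_shift_ge[where p=p and e=e and q=q and r="P i" and \<alpha>=\<alpha> and n=n] \<open>\<alpha> < 6 * \<Delta>\<close>
      unfolding p'_def by linarith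
  qed
  ultimately show ?thesis by blast
qed

section \<open>Independent sampling\<close>

lemma expectation_Pi_pmf_component:
  fixes Q :: "'a pmf" and h :: "'a \<Rightarrow> real"
  assumes "finite A" "k \<in> A"
  shows "measure_pmf.expectation (Pi_pmf A dflt (\<lambda>_. Q)) (\<lambda>f. h (f k)) = measure_pmf.expectation Q h"
proof -
  have "measure_pmf.expectation (Pi_pmf A dflt (\<lambda>_. Q)) (\<lambda>f. h (f k)) =
        measure_pmf.expectation (map_pmf (\<lambda>f. f k) (Pi_pmf A dflt (\<lambda>_. Q))) h"
    by simp
  also have "map_pmf (\<lambda>f. f k) (Pi_pmf A dflt (\<lambda>_. Q)) = Q"
    using assms by (simp add: Pi_pmf_component)
  finally show ?thesis .
qed

lemma Hoeffding_iid_pmf: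
  fixes Q :: "'a pmf" and w :: "'a \<Rightarrow> real" and m :: nat and t :: real
  assumes w: "\<forall>j\<in>set_pmf Q. \<bar>w j\<bar> \<le> 1" and "m > 0" and "t \<ge> 0"
  shows "measure_pmf.prob (Pi_pmf {..<m} dflt (\<lambda>_. Q))
           {f. (\<Sum>k<m. w (f k)) \<ge> m * measure_pmf.expectation Q w + m * t} \<le> exp (-(m * t\<^sup>2 / 2))"
proof -
  define PI where "PI = Pi_pmf {..<m} dflt (\<lambda>_. Q)"
  interpret Hoeffding_ineq "measure_pmf PI" "{..<m}" "\<lambda>k f. w (f k)" "\<lambda>_. -1" "\<lambda>_. 1"
     "\<Sum>k<m. measure_pmf.expectation PI (\<lambda>f. w (f k))"
  proof unfold_locales
    have "prob_space.indep_vars (measure_pmf PI) (\<lambda>_. count_space UNIV) (\<lambda>k f. f k) {..<m}"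
      unfolding PI_def by (rule indep_vars_Pi_pmf) simp
    then show "prob_space.indep_vars (measure_pmf PI) (\<lambda>_. borel) (\<lambda>k f. w (f k)) {..<m}"
      by (rule prob_space.indep_vars_compose2[OF measure_pmf.prob_space_axioms]) simp
  next
    fix k assume "k \<in> {..<m}"
    then have "\<forall>f\<in>set_pmf PI. f k \<in> set_pmf Q"
      by (auto simp: PI_def set_Pi_pmf PiE_dflt_def)
    then show "AE f in measure_pmf PI. w (f k) \<in> {-1..1}"
      using w by (auto intro!: AE_pmfI simp: abs_le_iff)
  qed auto
  have mean: "(\<Sum>k<m. measure_pmf.expectation PI (\<lambda>f. w (f k))) = m * measure_pmf.expectation Q w"
    by (simp add: PI_def expectation_Pi_pmf_component)
  have "measure_pmf.prob PI {f. (\<Sum>k<m. w (f k)) \<ge> m * measure_pmf.expectation Q w + m * t}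
          \<le> exp (-2 * (m * t)\<^sup>2 / (\<Sum>k<m. (1 - (-1::real))\<^sup>2))"
    using Hoeffding_ineq_ge[of "m * t"] \<open>m > 0\<close> \<open>t \<ge> 0\<close> by (simp add: mean)
  also have "\<dots> = exp (-(m * t\<^sup>2 / 2))"
    using \<open>m > 0\<close> by (simp add: power2_eq_square)
  finally show ?thesis by (simp add: PI_def)
qed

lemma ex_sample_avoiding_deviations:
  fixes Q :: "'a pmf" and g :: "'a \<Rightarrow> real" and w :: "'i \<Rightarrow> 'a \<Rightarrow> real"
    and t :: "'i \<Rightarrow> real" and I :: "'i set" and m :: nat
  assumes "finite I" and "m > 0"
    and g: "\<forall>j\<in>set_pmf Q. 0 \<le> g j \<and> g j \<le> 1"
    and w: "\<forall>i\<in>I. \<forall>j\<in>set_pmf Q. \<bar>w i j\<bar> \<le> 1" and t: "\<forall>i\<in>I. t i \<ge> 0"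
    and budget: "2 * real m * measure_pmf.expectation Q g + (\<Sum>i\<in>I. exp (-(m * (t i)\<^sup>2 / 2))) < 1"
  shows "\<exists>\<omega>. (\<forall>k<m. \<omega> k \<in> set_pmf Q) \<and> (\<Sum>k<m. g (\<omega> k)) < 1/2
           \<and> (\<forall>i\<in>I. (\<Sum>k<m. w i (\<omega> k)) < m * measure_pmf.expectation Q (w i) + m * t i)"
proof -
  define PI where "PI = Pi_pmf {..<m} undefined (\<lambda>_. Q)"
  have sample: "\<forall>k<m. f k \<in> set_pmf Q" if "f \<in> set_pmf PI" for f
    using that by (auto simp: PI_def set_Pi_pmf PiE_dflt_def)
  define B0 where "B0 = {f. (\<Sum>k<m. g (f k)) \<ge> 1/2}"
  define B where "B i = {f. (\<Sum>k<m. w i (f k)) \<ge> m * measure_pmf.expectation Q (w i) + m * t i}" for i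
  have integrable_g: "integrable (measure_pmf PI) (\<lambda>f. g (f k))" if "k < m" for k
    using g sample that
    by (intro measure_pmf.integrable_const_bound[where B=1] AE_pmfI) auto
  have "measure_pmf.prob PI {f\<in>space (measure_pmf PI). (\<Sum>k<m. g (f k)) \<ge> 1/2}
          \<le> measure_pmf.expectation PI (\<lambda>f. \<Sum>k<m. g (f k)) / (1/2)"
    by (rule integral_Markov_inequality_measure[where A=UNIV])
       (use g sample in \<open>auto intro!: AE_pmfI sum_nonneg integrable_g\<close>)
  then have "measure_pmf.prob PI B0 \<le> measure_pmf.expectation PI (\<lambda>f. \<Sum>k<m. g (f k)) / (1/2)"
    by (simp add: B0_def)
  also have "\<dots> = 2 * (\<Sum>k<m. measure_pmf.expectation PI (\<lambda>f. g (f k)))"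
    by (simp add: Bochner_Integration.integral_sum integrable_g)
  also have "\<dots> = 2 * real m * measure_pmf.expectation Q g"
    by (simp add: PI_def expectation_Pi_pmf_component)
  finally have B0: "measure_pmf.prob PI B0 \<le> 2 * real m * measure_pmf.expectation Q g" .
  have "measure_pmf.prob PI (B0 \<union> (\<Union>i\<in>I. B i)) \<le> measure_pmf.prob PI B0 + (\<Sum>i\<in>I. measure_pmf.prob PI (B i))"
    using measure_pmf.finite_measure_subadditive_finite[OF \<open>finite I\<close>, of B PI]
      measure_Un_le[of B0 "measure_pmf PI" "\<Union>i\<in>I. B i"] by simp
  also have "\<dots> \<le> 2 * real m * measure_pmf.expectation Q g + (\<Sum>i\<in>I. exp (-(m * (t i)\<^sup>2 / 2)))"
    using B0 w t \<open>m > 0\<close> by (intro add_mono sum_mono) (auto simp: B_def PI_def intro: Hoeffding_iid_pmf)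
  finally have "measure_pmf.prob PI (B0 \<union> (\<Union>i\<in>I. B i)) \<noteq> 1"
    using budget by linarith
  then have "measure_pmf.prob PI (UNIV - (B0 \<union> (\<Union>i\<in>I. B i))) \<noteq> 0"
    using measure_pmf.prob_compl[of "B0 \<union> (\<Union>i\<in>I. B i)" PI] by simp
  then have "set_pmf PI - (B0 \<union> (\<Union>i\<in>I. B i)) \<noteq> {}"
    by (auto simp: measure_pmf_zero_iff)
  then obtain \<omega> where "\<omega> \<in> set_pmf PI" "\<omega> \<notin> B0" "\<forall>i\<in>I. \<omega> \<notin> B i" by blast
  then show ?thesis using sample by (auto simp: B0_def B_def not_le)
qed

lemma ex_pmf_of_prob_dist:
  assumes "prob_dist n q"
  shows "\<exists>Q. set_pmf Q = supp n q \<and> (\<forall>f. measure_pmf.expectation Q f = dotp n q f)"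
proof -
  define d where "d j = (if j \<in> {1..n} then q j else 0)" for j
  have d_nonneg: "d j \<ge> 0" for j
    using assms by (auto simp: d_def prob_dist_def)
  have "(\<integral>\<^sup>+j. ennreal (d j) \<partial>count_space UNIV) = (\<integral>\<^sup>+j. ennreal (d j) \<partial>count_space {1..n})"
    by (subst nn_integral_count_space_indicator)
       (auto intro!: nn_integral_cong simp: d_def split: split_indicator)
  also have "\<dots> = ennreal (\<Sum>j=1..n. d j)"
    using d_nonneg by (simp add: nn_integral_count_space_finite sum_ennreal)
  finally have total: "(\<integral>\<^sup>+j. ennreal (d j) \<partial>count_space UNIV) = 1"
    using assms by (simp add: prob_dist_def d_def)
  define Q where "Q = embed_pmf d"
  have pmf_Q: "pmf Q j = d j" for j
    unfolding Q_def using d_nonneg total by (rule pmf_embed_pmf)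
  have "set_pmf Q = supp n q"
    using assms by (auto simp: set_pmf_eq pmf_Q d_def supp_def prob_dist_def order_less_le)
  moreover have "measure_pmf.expectation Q f = dotp n q f" for f
  proof -
    have "measure_pmf.expectation Q f = (\<Sum>j=1..n. f j * pmf Q j)"
      by (rule integral_measure_pmf_real) (auto simp: \<open>set_pmf Q = supp n q\<close> supp_def)
    then show ?thesis by (simp add: pmf_Q d_def dotp_def mult.commute)
  qed
  ultimately show ?thesis by blast
qed

lemma ex_far_dist_with_close_averages:
  fixes q :: "nat \<Rightarrow> real" and w :: "'i \<Rightarrow> nat \<Rightarrow> real" and t :: "'i \<Rightarrow> real" and m :: nat
  assumes q: "prob_dist n q" and "finite I" and "m > 0"
    and w: "\<forall>i\<in>I. \<forall>j\<in>{1..n}. \<bar>w i j\<bar> \<le> 1" and t: "\<forall>i\<in>I. t i \<ge> 0"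
    and budget: "2 * real m * dotp n q q + (\<Sum>i\<in>I. exp (-(m * (t i)\<^sup>2 / 2))) < 1"
  shows "\<exists>e. prob_dist n e \<and> supp n e \<subseteq> supp n q \<and> var_dist n e q > 1/2
           \<and> (\<forall>i\<in>I. dotp n e (w i) < dotp n q (w i) + t i)"
proof -
  obtain Q where set_Q: "set_pmf Q = supp n q" and E_Q: "\<And>f. measure_pmf.expectation Q f = dotp n q f"
    using ex_pmf_of_prob_dist[OF q] by blast
  have "\<forall>j\<in>set_pmf Q. 0 \<le> q j \<and> q j \<le> 1"
    using q by (auto simp: set_Q supp_def intro: prob_dist_le_1)
  then obtain \<omega> where \<omega>: "\<forall>k<m. \<omega> k \<in> supp n q" "(\<Sum>k<m. q (\<omega> k)) < 1/2"
      "\<forall>i\<in>I. (\<Sum>k<m. w i (\<omega> k)) < m * dotp n q (w i) + m * t i"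
    using ex_sample_avoiding_deviations[OF \<open>finite I\<close> \<open>m > 0\<close>, of Q q w t] w t budget
    by (auto simp: set_Q E_Q supp_def)
  have \<omega>_range: "\<forall>k<m. \<omega> k \<in> {1..n}"
    using \<omega>(1) by (auto simp: supp_def)
  show ?thesis
  proof (intro exI conjI)
    show "prob_dist n (empirical m \<omega>)"
      using \<open>m > 0\<close> \<omega>_range by (rule prob_dist_empirical)
    show "supp n (empirical m \<omega>) \<subseteq> supp n q"
      using supp_empirical \<omega>(1) by blast
    show "var_dist n (empirical m \<omega>) q > 1/2"
      using var_dist_empirical_ge[OF \<open>m > 0\<close> \<omega>_range q] \<omega>(2) by linarith
    show "\<forall>i\<in>I. dotp n (empirical m \<omega>) (w i) < dotp n q (w i) + t i"
      using \<omega>(3) \<open>m > 0\<close> by (simp add: dotp_empirical[OF \<omega>_range] divide_less_eq algebra_simps)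
  qed
qed

section \<open>Conditioning and the sample size\<close>

definition cond_dist :: "nat set \<Rightarrow> (nat \<Rightarrow> real) \<Rightarrow> nat \<Rightarrow> real" where
  "cond_dist L p j = (if j \<in> L then p j / sum p L else 0)"

context
  fixes n :: nat and L :: "nat set" and p :: "nat \<Rightarrow> real"
  assumes p: "prob_dist n p" and L: "L \<subseteq> {1..n}" and mass: "sum p L > 0"
begin

lemma prob_dist_cond_dist: "prob_dist n (cond_dist L p)"
proof -
  have "(\<Sum>j=1..n. cond_dist L p j) = (\<Sum>j\<in>L. p j / sum p L)"
    using L by (intro sum.mono_neutral_cong_right) (auto simp: cond_dist_def)
  then show ?thesis
    using p L mass by (auto simp: prob_dist_def cond_dist_def simp flip: sum_divide_distrib)
qed

lemma supp_cond_dist_subset: "supp n (cond_dist L p) \<subseteq> supp n p"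
  using mass by (auto simp: supp_def cond_dist_def zero_less_divide_iff)

lemma scaled_cond_dist_le:
  assumes "c \<le> sum p L" "j \<in> {1..n}"
  shows "c * cond_dist L p j \<le> p j"
proof (cases "j \<in> L")
  case True
  have "p j \<ge> 0" using p assms(2) by (simp add: prob_dist_def)
  then have "c * cond_dist L p j \<le> sum p L * cond_dist L p j"
    using True mass assms(1) by (intro mult_right_mono) (simp_all add: cond_dist_def)
  then show ?thesis using True mass by (simp add: cond_dist_def)
qed (use p assms(2) in \<open>simp add: cond_dist_def prob_dist_def\<close>)

lemma dotp_cond_dist_self:
  "dotp n (cond_dist L p) (cond_dist L p) = (\<Sum>j\<in>L. (p j)\<^sup>2) / (sum p L)\<^sup>2"
proof -
  have "dotp n (cond_dist L p) (cond_dist L p) = (\<Sum>j\<in>L. cond_dist L p j * cond_dist L p j)"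
    unfolding dotp_def using L by (intro sum.mono_neutral_right) (auto simp: cond_dist_def)
  then show ?thesis
    by (simp add: cond_dist_def power2_eq_square sum_divide_distrib)
qed

end

lemma mult_exp_neg_le_one_fifth:
  fixes k a b :: real
  assumes "k \<le> exp a" "a + 4 \<le> b"
  shows "k * exp (- b) \<le> 1/5"
proof -
  have "k * exp (- b) \<le> exp a * exp (- b)"
    using assms(1) by (intro mult_right_mono) auto
  also have "\<dots> \<le> exp (-4)"
    using assms(2) by (simp flip: exp_add)
  also have "\<dots> \<le> 1/5"
    using exp_ge_add_one_self[of 4] by (simp add: exp_minus divide_simps)
  finally show ?thesis .
qed

lemma sample_size_budget:
  fixes \<epsilon> \<Delta> \<rho> :: real and n k2 m :: nat
  assumes "0 < \<epsilon>" "\<epsilon> \<le> \<Delta>" "n \<ge> 2" and k2: "real k2 \<le> real n powr (27 * (\<Delta>/\<epsilon>)\<^sup>2)"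
    and m: "m = nat \<lfloor>784 * (\<Delta>/\<epsilon>)\<^sup>2 * ln n\<rfloor>"
    and \<rho>: "\<rho> \<le> 1 / (3136 * (\<Delta>/\<epsilon>)\<^sup>2 * ln n)"
  shows "m > 0"
    and "2 * real m * \<rho> + (real (n\<^sup>2) * exp (-(m * (\<epsilon> / (6 * \<Delta>))\<^sup>2 / 2))
           + real k2 * exp (-(m * (1/3)\<^sup>2 / 2))) < 1"
proof -
  define r where "r = (\<Delta>/\<epsilon>)\<^sup>2"
  define x where "x = ln (real n)"
  have "r \<ge> 1" using assms by (simp add: r_def)
  have "ln (2::real) \<ge> 1/2"
    using ln_le_minus_one[of "1/2 :: real"] by (simp add: ln_div)
  moreover have "ln (2::real) \<le> x"
    using assms by (simp add: x_def)
  ultimately have "x \<ge> 1/2" by linarith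
  then have "r * x \<ge> r / 2"
    using mult_left_mono[OF \<open>x \<ge> 1/2\<close>, of r] \<open>r \<ge> 1\<close> by simp
  then have "r * x \<ge> 1/2"
    using \<open>r \<ge> 1\<close> by linarith
  have "m = nat \<lfloor>784 * (r * x)\<rfloor>" "\<lfloor>784 * (r * x)\<rfloor> \<ge> 0"
    using m \<open>r * x \<ge> 1/2\<close> by (simp_all add: r_def x_def mult.assoc)
  then have m_ge: "real m \<ge> 784 * (r * x) - 1" and m_le: "real m \<le> 784 * (r * x)"
    using floor_correct[of "784 * (r * x)"] by simp_all
  then show "m > 0" using \<open>r * x \<ge> 1/2\<close> by simp
  have "real (n\<^sup>2) * exp (-(m * (\<epsilon> / (6 * \<Delta>))\<^sup>2 / 2)) \<le> 1/5"
  proof (rule mult_exp_neg_le_one_fifth)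
    show "real (n\<^sup>2) \<le> exp (2 * x)"
      using assms exp_of_nat_mult[of 2 "ln (real n)"] by (simp add: x_def)
    have "(2 * x + 4) * (72 * r) = 144 * (r * x) + 288 * r"
      by (simp add: algebra_simps)
    then have "(2 * x + 4) * (72 * r) \<le> m"
      using m_ge \<open>r * x \<ge> r / 2\<close> \<open>r \<ge> 1\<close> by linarith
    then show "2 * x + 4 \<le> m * (\<epsilon> / (6 * \<Delta>))\<^sup>2 / 2"
      using assms \<open>r \<ge> 1\<close> by (simp add: r_def power2_eq_square field_simps)
  qed
  moreover have "real k2 * exp (-(m * (1/3)\<^sup>2 / 2)) \<le> 1/5"
  proof (rule mult_exp_neg_le_one_fifth)
    show "real k2 \<le> exp (27 * (r * x))"
      using k2 assms by (simp add: r_def x_def powr_def mult.assoc)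
    show "27 * (r * x) + 4 \<le> m * (1/3)\<^sup>2 / 2"
      using m_ge \<open>r * x \<ge> 1/2\<close> by (simp add: power2_eq_square)
  qed
  moreover have "2 * real m * \<rho> \<le> 1/2"
  proof -
    have "2 * real m * \<rho> \<le> 2 * real m * (1 / (3136 * (r * x)))"
      using \<rho> by (intro mult_left_mono) (simp_all add: r_def x_def mult.assoc)
    also have "\<dots> \<le> 2 * (784 * (r * x)) * (1 / (3136 * (r * x)))"
      using m_le \<open>r * x \<ge> 1/2\<close> by (intro mult_right_mono) simp_all
    also have "\<dots> = 1/2"
      using \<open>r \<ge> 1\<close> \<open>x \<ge> 1/2\<close> by simp
    finally show ?thesis .
  qed
  ultimately show "2 * real m * \<rho> + (real (n\<^sup>2) * exp (-(m * (\<epsilon> / (6 * \<Delta>))\<^sup>2 / 2))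
           + real k2 * exp (-(m * (1/3)\<^sup>2 / 2))) < 1"
    by linarith
qed

theorem lemma1:
  fixes c c' \<epsilon> \<Delta> S \<beta> :: real and n k1 k2 :: nat
    and pt :: "nat \<Rightarrow> real" and H L :: "nat set"
    and v :: "nat \<Rightarrow> nat \<Rightarrow> real" and P :: "nat \<Rightarrow> nat \<Rightarrow> real"
  assumes c_def: "c = 56^2" and c'_def: "c' = 27"
    and eps: "0 < \<epsilon>" "\<epsilon> \<le> \<Delta>" "\<Delta> \<le> 1"
    and n: "n \<ge> 2"
    and pt: "prob_dist n pt"
    and S_def: "S = c * (\<Delta>/\<epsilon>)^2 * ln (real n)"
    and beta: "\<beta> \<le> 1" "1 - \<beta> \<ge> 8 * \<Delta>"
    and part: "H \<union> L = {1..n}" "H \<inter> L = {}"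
    and sumL: "(\<Sum>i\<in>L. pt i) = 1 - \<beta>"
    and sumH: "(\<Sum>i\<in>H. pt i) = \<beta>"
    and sqL: "(\<Sum>i\<in>L. (pt i)^2) \<le> (1 - \<beta>)^2 / S"
    and k1: "k1 = n^2"
    and v: "\<forall>i\<in>{1..k1}. \<forall>j\<in>{1..n}. \<bar>v i j\<bar> \<le> 1"
    and k2: "real k2 \<le> real n powr (c' * (\<Delta>/\<epsilon>)^2)"
    and P: "\<forall>i\<in>{1..k2}. prob_dist n (P i)"
  shows "\<exists>pt'. prob_dist n pt' \<and> supp n pt' \<subseteq> supp n pt
           \<and> var_dist n pt pt' = 3 * \<Delta>
           \<and> (\<forall>i\<in>{1..k1}. dotp n pt' (v i) \<le> dotp n pt (v i) + \<epsilon>)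
           \<and> (\<forall>i\<in>{1..k2}. var_dist n pt' (P i) > var_dist n pt (P i) - \<Delta>)"
proof -
  have "\<Delta> > 0" using eps by linarith
  have L: "L \<subseteq> {1..n}" and mass: "sum pt L = 1 - \<beta>" "1 - \<beta> > 0"
    using part sumL beta \<open>\<Delta> > 0\<close> by auto
  define q where "q = cond_dist L pt"
  define m where "m = nat \<lfloor>784 * (\<Delta>/\<epsilon>)\<^sup>2 * ln n\<rfloor>"
  have q: "prob_dist n q" "supp n q \<subseteq> supp n pt" "\<forall>j\<in>{1..n}. 6 * \<Delta> * q j \<le> pt j"
    using prob_dist_cond_dist supp_cond_dist_subset scaled_cond_dist_le[where c="6 * \<Delta>"]
      pt L mass beta \<open>\<Delta> > 0\<close> by (simp_all add: q_def)
  have "dotp n q q = (\<Sum>j\<in>L. (pt j)\<^sup>2) / (1 - \<beta>)\<^sup>2"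
    using dotp_cond_dist_self[OF pt L] mass by (simp add: q_def)
  also have "\<dots> \<le> 1 / S"
    using sqL mass by (simp add: divide_le_eq)
  finally have "m > 0" and tails: "2 * real m * dotp n q q + (real (n\<^sup>2) * exp (-(m * (\<epsilon> / (6 * \<Delta>))\<^sup>2 / 2))
      + real k2 * exp (-(m * (1/3)\<^sup>2 / 2))) < 1"
    using sample_size_budget[OF eps(1,2) n _ m_def] k2 S_def by (simp_all add: c_def c'_def)
  \<comment> \<open>The sign tests enter as upper-deviation tests for the negated sign vectors.\<close>
  define w :: "nat + nat \<Rightarrow> nat \<Rightarrow> real" where "w = case_sum v (\<lambda>i j. - sgn (pt j - P i j))"
  define t :: "nat + nat \<Rightarrow> real" where "t = case_sum (\<lambda>_. \<epsilon> / (6 * \<Delta>)) (\<lambda>_. 1/3)"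
  have "2 * real m * dotp n q q + (\<Sum>i\<in>{1..k1} <+> {1..k2}. exp (-(real m * (t i)\<^sup>2 / 2))) < 1"
    using tails by (simp add: sum.Plus t_def k1)
  then obtain e where e: "prob_dist n e" "supp n e \<subseteq> supp n q" "var_dist n e q > 1/2"
      "\<forall>i\<in>{1..k1} <+> {1..k2}. dotp n e (w i) < dotp n q (w i) + t i"
    using ex_far_dist_with_close_averages[OF q(1) _ \<open>m > 0\<close>, of "{1..k1} <+> {1..k2}" w t] v eps
    by (fastforce simp: w_def t_def abs_sgn)
  show ?thesis
  proof (rule ex_shifted_dist[OF pt e(1) q(1) e(3) \<open>\<Delta> > 0\<close> _ q(3)])
    show "supp n e \<subseteq> supp n pt" using e(2) q(2) by blast
    show "\<forall>i\<in>{1..k1}. dotp n e (v i) < dotp n q (v i) + \<epsilon> / (6 * \<Delta>)"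
      using e(4) by (force simp: w_def t_def)
    show "\<forall>i\<in>{1..k2}. dotp n e (\<lambda>j. sgn (pt j - P i j)) > dotp n q (\<lambda>j. sgn (pt j - P i j)) - 1/3"
      using e(4) by (force simp: w_def t_def dotp_def sum_negf)
  qed (use eps in auto)
qed

end
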